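(* Let $(x_k)_{k\ge0}$ be an arbitrary sequence of numbers (or indeterminates), and define $a_n=x_n$ if $n=2^k-1$ for some integer $k\ge0$ and $a_n=0$ otherwise. Let $d(n)=\det\left(a_{i+j}\right)_{i,j=0}^{n-1}$ with $d(0)=1$, and for $n\ge1$ let $\alpha(n)=2^{\lceil\log_2 n\rceil}-1$ and $\beta(n)=2n-1-\alpha(n)$. Then for all $n\ge1$, $$d(n)=(-1)^{\binom{\beta(n)}{2}}x_{\alpha(n)}^{\beta(n)}\,d(n-\beta(n)).$$ *)

theory Defs
  imports Complex_Main "Jordan_Normal_Form.Determinant"
begin

definition seq_a :: "(nat \<Rightarrow> 'a::comm_ring_1) \<Rightarrow> nat \<Rightarrow> 'a" where
  "seq_a x n = (if \<exists>k::nat. n = 2 ^ k - 1 then x n else 0)"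

definition hankel_d :: "(nat \<Rightarrow> 'a::comm_ring_1) \<Rightarrow> nat \<Rightarrow> 'a" where
  "hankel_d x n = (if n = 0 then 1 else det (mat n n (\<lambda>(i, j). seq_a x (i + j))))"

definition alpha :: "nat \<Rightarrow> nat" where
  "alpha n = 2 ^ nat \<lceil>log 2 (real n)\<rceil> - 1"

definition beta :: "nat \<Rightarrow> nat" where
  "beta n = 2 * n - 1 - alpha n"

end

theory Submission
  imports Defs
begin

text \<open>
  Let \<open>2^(m-1) < n \<le> 2^m\<close>. Among the indices \<open>2^(m-1) \<le> s \<le> 2n - 2\<close> the only one
  at which \<open>a\<close> can be nonzero is \<open>s = 2^m - 1\<close>. Hence all rows and
  columns with index \<open>\<ge> 2^(m-1)\<close> vanish off the anti-diagonal \<open>i + j = 2^m - 1\<close>.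
  A permutation contributing to the determinant must then send each of the last
  \<open>n - N\<close> indices \<open>i\<close> (where \<open>N = 2^m - n\<close>) to \<open>2^m - 1 - i\<close>, so it is the reversal
  of \<open>{N..<n}\<close> composed with a permutation of \<open>{0..<N}\<close>. The reversal contributes the
  sign \<open>(-1)^(n - N choose 2)\<close> and the factor \<open>x(2^m - 1)^(n - N)\<close>, and what remains
  is \<open>d(N)\<close>; finally \<open>\<alpha>(n) = 2^m - 1\<close> and \<open>\<beta>(n) = n - N\<close>.
\<close>

definition interval_reversal :: "nat \<Rightarrow> nat \<Rightarrow> nat \<Rightarrow> nat" where
  "interval_reversal a k i = (if a \<le> i \<and> i < a + k then 2 * a + k - 1 - i else i)"

lemma interval_reversal_Suc_Suc:
  "interval_reversal a (k + 2) = transpose a (a + k + 1) \<circ> interval_reversal (a + 1) k"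
  by (auto simp: interval_reversal_def fun_eq_iff transpose_def)

lemma interval_reversal_trivial: "k \<le> 1 \<Longrightarrow> interval_reversal a k = id"
  by (auto simp: interval_reversal_def fun_eq_iff)

lemma interval_reversal_permutes: "interval_reversal a k permutes {a..<a + k}"
proof (induction k arbitrary: a rule: nat_induct2)
  case (step k)
  have "interval_reversal (a + 1) k permutes {a..<a + (k + 2)}"
    by (rule permutes_subset[OF step.IH]) auto
  then show ?case
    unfolding interval_reversal_Suc_Suc by (intro permutes_compose permutes_swap_id) auto
qed (simp_all add: interval_reversal_trivial permutes_id)

lemma sign_interval_reversal: "sign (interval_reversal a k) = (-1) ^ (k choose 2)"
proof (induction k arbitrary: a rule: nat_induct2)
  case (step k)
  have "permutation (interval_reversal (a + 1) k)"
    using interval_reversal_permutes permutation_permutes by blast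
  then have "sign (interval_reversal a (k + 2)) = - sign (interval_reversal (a + 1) k)"
    unfolding interval_reversal_Suc_Suc by (simp add: sign_compose permutation_swap_id sign_swap_id)
  moreover have "k + 2 choose 2 = (k choose 2) + 2 * k + 1"
    by (simp add: choose_two numeral_2_eq_2)
  ultimately show ?case
    by (simp add: step.IH power_add power_mult)
qed (simp_all add: interval_reversal_trivial sign_id choose_two)

lemma bij_betw_compose_permutes:
  assumes rho: "\<rho> permutes B" and disj: "A \<inter> B = {}"
  shows "bij_betw (\<lambda>q. q \<circ> \<rho>) {q. q permutes A}
           {p. p permutes A \<union> B \<and> (\<forall>i\<in>B. p i = \<rho> i)}"
proof (rule bij_betw_byWitness[where f' = "\<lambda>p. p \<circ> inv_into UNIV \<rho>"])
  have rho': "\<rho> permutes A \<union> B" "inv_into UNIV \<rho> permutes A \<union> B"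
    by (rule permutes_subset[OF rho], blast)+ (rule permutes_subset[OF permutes_inv[OF rho]], blast)
  show "\<forall>q\<in>{q. q permutes A}. q \<circ> \<rho> \<circ> inv_into UNIV \<rho> = q"
    "\<forall>p\<in>{p. p permutes A \<union> B \<and> (\<forall>i\<in>B. p i = \<rho> i)}. p \<circ> inv_into UNIV \<rho> \<circ> \<rho> = p"
    using permutes_inv_o[OF rho] by (simp_all add: comp_assoc)
  show "(\<lambda>q. q \<circ> \<rho>) ` {q. q permutes A} \<subseteq> {p. p permutes A \<union> B \<and> (\<forall>i\<in>B. p i = \<rho> i)}"
  proof clarify
    fix q assume q: "q permutes A"
    have "q permutes A \<union> B" by (rule permutes_subset[OF q]) blast
    with rho'(1) have "q \<circ> \<rho> permutes A \<union> B" by (rule permutes_compose)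
    moreover have "q (\<rho> i) = \<rho> i" if "i \<in> B" for i
    proof -
      have "\<rho> i \<in> B" using that by (simp add: permutes_in_image[OF rho])
      then show ?thesis using disj by (intro permutes_not_in[OF q]) blast
    qed
    ultimately show "q \<circ> \<rho> permutes A \<union> B \<and> (\<forall>i\<in>B. (q \<circ> \<rho>) i = \<rho> i)" by simp
  qed
  show "(\<lambda>p. p \<circ> inv_into UNIV \<rho>) ` {p. p permutes A \<union> B \<and> (\<forall>i\<in>B. p i = \<rho> i)}
          \<subseteq> {q. q permutes A}"
  proof clarify
    fix p assume p: "p permutes A \<union> B" and p_rho: "\<forall>i\<in>B. p i = \<rho> i"
    have "p \<circ> inv_into UNIV \<rho> permutes A \<union> B" using rho'(2) p by (rule permutes_compose)
    then show "p \<circ> inv_into UNIV \<rho> permutes A"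
    proof (rule permutes_superset)
      fix x assume "x \<in> A \<union> B - A"
      then have "x \<in> B" by blast
      moreover have "inv_into UNIV \<rho> x \<in> B"
        using \<open>x \<in> B\<close> by (simp add: permutes_in_image[OF permutes_inv[OF rho]])
      ultimately show "(p \<circ> inv_into UNIV \<rho>) x = x"
        using p_rho permutes_inverses(1)[OF rho] by simp
    qed
  qed
qed

lemma det_mat_permutation_sum:
  "det (mat n n (\<lambda>(i, j). f i j))
     = (\<Sum>p | p permutes {0..<n}. signof p * (\<Prod>i = 0..<n. f i (p i)))"
  unfolding det_def'[of _ n, OF mat_carrier]
  by (intro sum.cong refl arg_cong2[where f = "(*)"] prod.cong) (auto dest: permutes_in_image)

context
  fixes f :: "nat \<Rightarrow> nat \<Rightarrow> 'a::comm_ring_1" and n N h c :: nat and v :: 'a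
  assumes corner: "c + 1 = N + n" "2 * h \<le> c + 1" "N \<le> h"
    and antidiagonal: "\<And>i j. i < n \<Longrightarrow> j < n \<Longrightarrow> h \<le> i \<or> h \<le> j \<Longrightarrow>
                         f i j = (if i + j = c then v else 0)"
begin

lemma nonvanishing_permutation_antidiagonal:
  assumes p: "p permutes {0..<n}" and nz: "\<forall>i<n. f i (p i) \<noteq> 0"
    and i: "N \<le> i" "i < n"
  shows "p i = c - i"
proof (cases "h \<le> i")
  case True
  have "p i < n" using p i by (auto dest: permutes_in_image)
  with True i nz antidiagonal show ?thesis by (auto split: if_splits)
next
  case False
  define j where "j = c - i"
  have j: "h \<le> j" "j < n" using False corner i unfolding j_def by auto
  define k where "k = inv_into UNIV p j"
  have "p k = j" "k < n" unfolding k_def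
    using j permutes_inverses(1)[OF p] permutes_in_image[OF permutes_inv[OF p]] by auto
  with j nz antidiagonal have "k + j = c" by (auto split: if_splits)
  then have "k = i" using j_def i corner by auto
  with \<open>p k = j\<close> show ?thesis by (simp add: j_def)
qed

lemma det_strip_antidiagonal:
  assumes "N \<le> n"
  shows "det (mat n n (\<lambda>(i, j). f i j))
           = (-1) ^ ((n - N) choose 2) * v ^ (n - N) * det (mat N N (\<lambda>(i, j). f i j))"
proof -
  define \<rho> where "\<rho> = interval_reversal N (n - N)"
  have \<rho>: "\<rho> i = c - i" if "i \<in> {N..<n}" for i
    using that corner unfolding \<rho>_def interval_reversal_def by auto
  have \<rho>_permutes: "\<rho> permutes {N..<n}"
    using interval_reversal_permutes[of N "n - N"] assms by (simp add: \<rho>_def)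
  define summand where "summand p = signof p * (\<Prod>i = 0..<n. f i (p i))" for p
  define P where "P = {p. p permutes {0..<N} \<union> {N..<n} \<and> (\<forall>i\<in>{N..<n}. p i = \<rho> i)}"
  have split: "{0..<N} \<union> {N..<n} = {0..<n}" using assms by auto
  have "det (mat n n (\<lambda>(i, j). f i j)) = (\<Sum>p | p permutes {0..<n}. summand p)"
    by (simp add: det_mat_permutation_sum summand_def)
  also have "\<dots> = sum summand P"
  proof (rule sum.mono_neutral_right)
    show "finite {p. p permutes {0..<n}}" by (simp add: finite_permutations)
    show "P \<subseteq> {p. p permutes {0..<n}}" by (auto simp: P_def split)
    show "\<forall>p \<in> {p. p permutes {0..<n}} - P. summand p = 0"
    proof
      fix p assume p: "p \<in> {p. p permutes {0..<n}} - P"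
      show "summand p = 0"
      proof (rule ccontr)
        assume "summand p \<noteq> 0"
        then have "(\<Prod>i = 0..<n. f i (p i)) \<noteq> 0" by (auto simp: summand_def)
        then have "\<forall>i<n. f i (p i) \<noteq> 0" using prod_zero[of "{0..<n}"] by fastforce
        then have "p i = \<rho> i" if "i \<in> {N..<n}" for i
          using p that \<rho> nonvanishing_permutation_antidiagonal by simp
        with p show False by (simp add: P_def split)
      qed
    qed
  qed
  also have "\<dots> = (\<Sum>q | q permutes {0..<N}. summand (q \<circ> \<rho>))"
    using bij_betw_compose_permutes[OF \<rho>_permutes, of "{0..<N}"]
    by (intro sum.reindex_bij_betw[symmetric]) (simp add: P_def)
  also have "\<dots> = (\<Sum>q | q permutes {0..<N}.
                     signof \<rho> * v ^ (n - N) * (signof q * (\<Prod>i = 0..<N. f i (q i))))"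
  proof (rule sum.cong[OF refl], clarify)
    fix q assume q: "q permutes {0..<N}"
    have "sign (q \<circ> \<rho>) = sign q * sign \<rho>"
      using q \<rho>_permutes by (blast intro: sign_compose permutation_permutes[THEN iffD2])
    moreover have "(\<Prod>i = N..<n. f i ((q \<circ> \<rho>) i)) = v ^ (n - N)"
    proof -
      have "f i ((q \<circ> \<rho>) i) = v" if i: "i \<in> {N..<n}" for i
      proof -
        have "N \<le> c - i" "c - i < n" "h \<le> i \<or> h \<le> c - i" "i + (c - i) = c"
          using i corner by auto
        then show ?thesis using i \<rho> permutes_not_in[OF q] antidiagonal[of i "c - i"] by auto
      qed
      then show ?thesis by simp
    qed
    moreover have "(\<Prod>i = 0..<N. f i ((q \<circ> \<rho>) i)) = (\<Prod>i = 0..<N. f i (q i))"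
      using permutes_not_in[OF \<rho>_permutes] by simp
    moreover have "(\<Prod>i = 0..<n. f i ((q \<circ> \<rho>) i))
        = (\<Prod>i = 0..<N. f i ((q \<circ> \<rho>) i)) * (\<Prod>i = N..<n. f i ((q \<circ> \<rho>) i))"
      using assms by (simp add: prod.atLeastLessThan_concat)
    ultimately show "summand (q \<circ> \<rho>) = signof \<rho> * v ^ (n - N) * (signof q * (\<Prod>i = 0..<N. f i (q i)))"
      by (simp add: summand_def)
  qed
  also have "\<dots> = (-1) ^ ((n - N) choose 2) * v ^ (n - N) * det (mat N N (\<lambda>(i, j). f i j))"
    unfolding det_mat_permutation_sum sum_distrib_left[symmetric]
    by (simp add: \<rho>_def sign_interval_reversal)
  finally show ?thesis .
qed

end

lemma pow2_eq_of_window: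
  fixes k m :: nat
  assumes "2 ^ m div 2 < (2::nat) ^ k" "(2::nat) ^ k < 2 * 2 ^ m"
  shows "k = m"
proof -
  have "k < Suc m" using assms(2) by (simp del: power_Suc add: power_Suc[symmetric])
  then have "k \<le> m" by simp
  moreover have "\<not> k < m"
  proof
    assume "k < m"
    then have "2 * 2 ^ k \<le> (2::nat) ^ m"
      using power_increasing[of "Suc k" m "2::nat"] by simp
    with assms(1) show False by presburger
  qed
  ultimately show ?thesis by simp
qed

lemma seq_a_dyadic_window:
  fixes m s :: nat
  assumes "2 ^ m div 2 \<le> s" "s < 2 * 2 ^ m - 1"
  shows "seq_a x s = (if s = 2 ^ m - 1 then x s else 0)"
proof (cases "\<exists>k::nat. s = 2 ^ k - 1")
  case True
  then obtain k :: nat where k: "s = 2 ^ k - 1" ..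
  have "0 < (2::nat) ^ k" by simp
  with assms have "k = m" unfolding k by (intro pow2_eq_of_window) linarith+
  moreover have "seq_a x s = x s" using True by (simp add: seq_a_def)
  ultimately show ?thesis using k by simp
next
  case False
  then show ?thesis by (auto simp: seq_a_def)
qed

lemma hankel_d_eq_det: "hankel_d x n = det (mat n n (\<lambda>(i, j). seq_a x (i + j)))"
  by (simp add: hankel_d_def)

lemma pow2_ceiling_log_bounds:
  fixes n :: nat
  assumes "n \<ge> 1"
  shows "n \<le> 2 ^ nat \<lceil>log 2 (real n)\<rceil>" "2 ^ nat \<lceil>log 2 (real n)\<rceil> < 2 * n"
proof -
  define m where "m = nat \<lceil>log 2 (real n)\<rceil>"
  have m: "real m = of_int \<lceil>log 2 (real n)\<rceil>"
    unfolding m_def using assms by simp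
  have "log 2 (real n) \<le> real m" using m by linarith
  then have "real n \<le> 2 ^ m" using assms by (simp add: log_le_iff powr_realpow)
  then show "n \<le> 2 ^ nat \<lceil>log 2 (real n)\<rceil>"
    unfolding m_def[symmetric] by (metis of_nat_le_iff of_nat_numeral of_nat_power)
  have "real m - 1 < log 2 (real n)" using m by linarith
  then have "2 powr (real m - 1) < real n" using assms by (simp add: less_log_iff)
  then have "real (2 ^ m) < real (2 * n)" by (simp add: powr_diff powr_realpow)
  then show "2 ^ nat \<lceil>log 2 (real n)\<rceil> < 2 * n" unfolding m_def[symmetric] by linarith
qed

theorem theorem4p1:
  fixes x :: "nat \<Rightarrow> 'a::comm_ring_1" and n :: nat
  assumes "n \<ge> 1"
  shows "hankel_d x n
    = (-1) ^ (beta n choose 2) * x (alpha n) ^ beta n * hankel_d x (n - beta n)"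
proof -
  define m where "m = nat \<lceil>log 2 (real n)\<rceil>"
  have n_le: "n \<le> 2 ^ m" and lt: "2 ^ m < 2 * n"
    using pow2_ceiling_log_bounds[OF assms] unfolding m_def by auto
  define N where "N = 2 ^ m - n"
  have alpha: "alpha n = 2 ^ m - 1" unfolding alpha_def m_def ..
  have beta: "beta n = n - N" and rest: "n - (n - N) = N"
    unfolding beta_def alpha N_def using n_le lt by auto
  have "hankel_d x n = det (mat n n (\<lambda>(i, j). seq_a x (i + j)))"
    by (rule hankel_d_eq_det)
  also have "\<dots> = (-1) ^ ((n - N) choose 2) * x (2 ^ m - 1) ^ (n - N)
                    * det (mat N N (\<lambda>(i, j). seq_a x (i + j)))"
  proof (rule det_strip_antidiagonal[where h = "2 ^ m div 2" and c = "2 ^ m - 1"])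
    show "(2::nat) ^ m - 1 + 1 = N + n" "2 * (2 ^ m div 2) \<le> (2::nat) ^ m - 1 + 1"
      "N \<le> 2 ^ m div 2" "N \<le> n"
      unfolding N_def using n_le lt by auto
    show "seq_a x (i + j) = (if i + j = 2 ^ m - 1 then x (2 ^ m - 1) else 0)"
      if "i < n" "j < n" "2 ^ m div 2 \<le> i \<or> 2 ^ m div 2 \<le> j" for i j
      using seq_a_dyadic_window[of m "i + j" x] that n_le by auto
  qed
  finally show ?thesis unfolding beta rest alpha hankel_d_eq_det .
qed

end
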